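(* Let $G\neq0$ and $\Lambda\in\mathbb R$, and let $T(U)=2G\log U+\Lambda\,\mathrm{tr}(\log U)\mathbb 1$ on $\mathrm{PSym}(3)$. Then there exists a differentiable function $W:\mathrm{PSym}(3)\to\mathbb R$ with $T(U)=D W(U)$ (i.e. $\langle T(U),H\rangle=DW(U)[H]$ for all $H\in\mathrm{Sym}(3)$) if and only if $\Lambda=0$ (equivalently, Poisson's ratio $\nu=\frac{\Lambda}{2(\Lambda+G)}$ vanishes). In that case, with normalization $W(\mathbb 1)=0$, $$W(U)=2G\big[\langle U,\log U-\mathbb 1\rangle+3\big]=2G\sum_{i=1}^3\lambda_i(\ln\lambda_i-1)+6G,$$ where $\lambda_i$ are the eigenvalues of $U$.
   Context: $\mathrm{Sym}(3)$: real symmetric $3\times3$ matrices; $\mathrm{PSym}(3)$: symmetric positive definite ones; $\mathbb 1$: identity; $\log$: principal matrix logarithm; $\langle X,Y\rangle=\mathrm{tr}(Y^TX)$. *)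

theory Defs
  imports "HOL-Analysis.Analysis"
begin

type_synonym mat3 = "real^3^3"

definition frob :: "mat3 \<Rightarrow> mat3 \<Rightarrow> real" where
  "frob X Y = trace (transpose Y ** X)"

definition Sym3 :: "mat3 set" where
  "Sym3 = {A. transpose A = A}"

definition PSym3 :: "mat3 set" where
  "PSym3 = {A \<in> Sym3. \<forall>x::real^3. x \<noteq> 0 \<longrightarrow> x \<bullet> (A *v x) > 0}"

definition diag3 :: "(3 \<Rightarrow> real) \<Rightarrow> mat3" where
  "diag3 l = (\<chi> i j. if i = j then l i else 0)"

definition mlog :: "mat3 \<Rightarrow> mat3" where
  "mlog U = (THE L. \<exists>Q l. orthogonal_matrix Q \<and> (\<forall>i. l i > 0) \<and>
       U = Q ** diag3 l ** transpose Q \<and> L = Q ** diag3 (\<lambda>i. ln (l i)) ** transpose Q)"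

definition Tmap :: "real \<Rightarrow> real \<Rightarrow> mat3 \<Rightarrow> mat3" where
  "Tmap G \<Lambda> U = (2 * G) *\<^sub>R mlog U + (\<Lambda> * trace (mlog U)) *\<^sub>R mat 1"

definition is_potential :: "(mat3 \<Rightarrow> real) \<Rightarrow> (mat3 \<Rightarrow> mat3) \<Rightarrow> bool" where
  "is_potential W T \<longleftrightarrow> (\<forall>U\<in>PSym3. \<exists>D. (W has_derivative D) (at U within PSym3) \<and>
       (\<forall>H\<in>Sym3. D H = frob (T U) H))"

end

theory Submission
  imports Defs
begin

text \<open>
  Every \<open>U \<in> PSym(3)\<close> is \<open>Q diag(\<lambda>) Q\<^sup>T\<close> with \<open>Q\<close> orthogonal and \<open>\<lambda> > 0\<close>, and
  \<open>log U = Q diag(ln \<lambda>) Q\<^sup>T\<close> does not depend on the choice of \<open>Q\<close>. Since \<open>PSym(3)\<close> is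
  convex, a potential is determined up to a constant by integrating \<open>T\<close> along segments.
  For \<open>\<Lambda> \<noteq> 0\<close> the integrals of \<open>T\<close> around a rectangle of diagonal matrices
  \<open>diag(a, b, 1)\<close> do not cancel, so there is no potential. For \<open>\<Lambda> = 0\<close>,
  \<open>T(U) = 2G log U\<close> is the derivative of \<open>2G tr(U log U - U)\<close>: if \<open>U = P diag(\<lambda>) P\<^sup>T\<close> and
  \<open>V = Q diag(\<mu>) Q\<^sup>T\<close>, the remainder of the first order expansion at \<open>U\<close> is a sum of
  Bregman divergences of \<open>x ln x\<close> at the pairs \<open>(\<lambda>\<^sub>k, \<mu>\<^sub>m)\<close>, weighted by the squared
  entries of \<open>P\<^sup>T Q\<close>, hence lies between \<open>0\<close> and \<open>|V - U|\<^sup>2 / min \<lambda>\<close>.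
\<close>

section \<open>Spectral calculus of symmetric matrices\<close>

lemma frob_eq_sum: "frob X Y = (\<Sum>i\<in>UNIV. \<Sum>j\<in>UNIV. X$i$j * Y$i$j)"
  unfolding frob_def trace_def matrix_matrix_mult_def transpose_def
  by (simp, subst sum.swap, simp add: mult.commute)

lemma frob_inner: "frob X Y = X \<bullet> Y"
  unfolding frob_eq_sum inner_vec_def by simp

lemma diag3_mult_nth: "(P ** diag3 l)$i$j = P$i$j * l j"
  unfolding diag3_def matrix_matrix_mult_def
  by (simp add: if_distrib sum.delta cong: if_cong)

lemma mult_diag3_nth: "(diag3 l ** P)$i$j = l i * P$i$j"
  unfolding diag3_def matrix_matrix_mult_def
  using exhaust_3[of i] by (auto simp: sum_3)

lemma transpose_diag3 [simp]: "transpose (diag3 l) = diag3 l"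
  unfolding diag3_def transpose_def by (simp add: vec_eq_iff)

lemma diag3_const_1: "diag3 (\<lambda>i. 1) = mat 1"
  by (simp add: diag3_def mat_def vec_eq_iff)

lemma transpose_spectral: "transpose (Q ** diag3 l ** transpose Q) = Q ** diag3 l ** transpose Q"
  by (simp add: matrix_transpose_mul matrix_mul_assoc)

lemma spectral_nth: "(P ** diag3 a ** transpose P)$i$j = (\<Sum>k\<in>UNIV. P$i$k * a k * P$j$k)"
  unfolding diag3_def matrix_matrix_mult_def transpose_def
  by (simp add: sum_distrib_right if_distrib sum.delta cong: if_cong)

lemma trace_diag3_mult: "trace (diag3 b ** M) = (\<Sum>i\<in>UNIV. b i * M$i$i)"
  by (simp add: trace_def mult_diag3_nth)

lemma frob_spectral:
  "frob (P ** diag3 a ** transpose P) (Q ** diag3 b ** transpose Q)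
    = (\<Sum>k\<in>UNIV. \<Sum>m\<in>UNIV. ((transpose P ** Q)$k$m)\<^sup>2 * a k * b m)"
proof -
  define C where "C = transpose P ** Q"
  have "frob (P ** diag3 a ** transpose P) (Q ** diag3 b ** transpose Q)
      = trace (diag3 b ** (transpose C ** diag3 a ** C))"
  proof -
    define X where "X = diag3 b ** (transpose C ** diag3 a ** transpose P)"
    have "transpose (Q ** diag3 b ** transpose Q) ** (P ** diag3 a ** transpose P) = Q ** X"
      by (simp add: X_def transpose_spectral C_def matrix_transpose_mul matrix_mul_assoc)
    moreover have "X ** Q = diag3 b ** (transpose C ** diag3 a ** C)"
      by (simp add: X_def C_def matrix_mul_assoc)
    ultimately show ?thesis unfolding frob_def by (metis trace_mul_sym)
  qed
  also have "\<dots> = (\<Sum>m\<in>UNIV. \<Sum>k\<in>UNIV. b m * (a k * (C$k$m)\<^sup>2))"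
    using spectral_nth[of "transpose C" a]
    by (simp add: trace_diag3_mult sum_distrib_left power2_eq_square algebra_simps)
       (simp add: transpose_def)
  finally show ?thesis
    unfolding C_def by (subst sum.swap) (simp add: algebra_simps)
qed

lemma spectral_fun_unique:
  assumes Q: "orthogonal_matrix Q" and Q': "orthogonal_matrix Q'"
    and eq: "Q ** diag3 l ** transpose Q = Q' ** diag3 l' ** transpose Q'"
  shows "Q ** diag3 (\<lambda>i. f (l i)) ** transpose Q = Q' ** diag3 (\<lambda>i. f (l' i)) ** transpose Q'"
proof -
  define P where "P = transpose Q' ** Q"
  have QQ: "transpose Q ** Q = mat 1" "Q ** transpose Q = mat 1"
    and QQ': "transpose Q' ** Q' = mat 1" "Q' ** transpose Q' = mat 1"
    using Q Q' by (auto simp: orthogonal_matrix_def)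
  have "transpose Q' ** (Q ** diag3 l ** transpose Q) ** Q = P ** diag3 l"
    by (simp add: P_def) (metis matrix_mul_assoc matrix_mul_rid QQ(1))
  moreover have "transpose Q' ** (Q' ** diag3 l' ** transpose Q') ** Q = diag3 l' ** P"
    by (simp add: P_def) (metis matrix_mul_assoc matrix_mul_lid QQ'(1))
  ultimately have "P ** diag3 l = diag3 l' ** P" using eq by simp
  then have "P$i$j * l j = l' i * P$i$j" for i j
    by (metis diag3_mult_nth mult_diag3_nth)
  \<comment> \<open>every nonzero entry of \<open>P\<close> links equal eigenvalues, which \<open>f\<close> cannot separate\<close>
  then have eig: "P$i$j = 0 \<or> l j = l' i" for i j by auto
  have "P$i$j * f (l j) = f (l' i) * P$i$j" for i j using eig[of i j] by auto
  then have PL: "P ** diag3 (\<lambda>i. f (l i)) = diag3 (\<lambda>i. f (l' i)) ** P"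
    by (simp add: vec_eq_iff diag3_mult_nth mult_diag3_nth)
  have QP: "Q' ** P = Q" unfolding P_def by (metis matrix_mul_assoc matrix_mul_lid QQ'(2))
  have "Q ** diag3 (\<lambda>i. f (l i)) ** transpose Q = Q' ** (P ** diag3 (\<lambda>i. f (l i))) ** transpose Q"
    by (metis QP matrix_mul_assoc)
  also have "\<dots> = Q' ** diag3 (\<lambda>i. f (l' i)) ** (P ** transpose Q)"
    by (metis PL matrix_mul_assoc)
  also have "P ** transpose Q = transpose Q'"
    unfolding P_def by (metis matrix_mul_assoc matrix_mul_rid QQ(2))
  finally show ?thesis .
qed

lemma mlog_spectral:
  assumes "orthogonal_matrix Q" and "\<forall>i. l i > 0" and "U = Q ** diag3 l ** transpose Q"
  shows "mlog U = Q ** diag3 (\<lambda>i. ln (l i)) ** transpose Q"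
  unfolding mlog_def
proof (rule the_equality)
  show "\<exists>Q' l'. orthogonal_matrix Q' \<and> (\<forall>i. l' i > 0) \<and> U = Q' ** diag3 l' ** transpose Q' \<and>
      Q ** diag3 (\<lambda>i. ln (l i)) ** transpose Q = Q' ** diag3 (\<lambda>i. ln (l' i)) ** transpose Q'"
    using assms by blast
next
  fix L assume "\<exists>Q' l'. orthogonal_matrix Q' \<and> (\<forall>i. l' i > 0) \<and> U = Q' ** diag3 l' ** transpose Q' \<and>
      L = Q' ** diag3 (\<lambda>i. ln (l' i)) ** transpose Q'"
  then obtain Q' l' where Q': "orthogonal_matrix Q'" and "U = Q' ** diag3 l' ** transpose Q'"
      and L: "L = Q' ** diag3 (\<lambda>i. ln (l' i)) ** transpose Q'" by blast
  then have "Q ** diag3 l ** transpose Q = Q' ** diag3 l' ** transpose Q'" using assms(3) by simp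
  then show "L = Q ** diag3 (\<lambda>i. ln (l i)) ** transpose Q"
    unfolding L using spectral_fun_unique[OF assms(1) Q'] by simp
qed

lemma linear_le_quadratic_imp_zero:
  fixes N C :: real
  assumes "\<And>s. s * N \<le> s\<^sup>2 * C"
  shows "N = 0"
proof -
  define k where "k = \<bar>C\<bar> + 1"
  define s where "s = N / k"
  have k: "k > 0" "C < k" unfolding k_def by linarith+
  have "N\<^sup>2 * k = (s * N) * k\<^sup>2" using k by (simp add: s_def power2_eq_square)
  also have "\<dots> \<le> (s\<^sup>2 * C) * k\<^sup>2" by (rule mult_right_mono[OF assms]) simp
  also have "\<dots> = N\<^sup>2 * C" using k by (simp add: s_def power2_eq_square)
  finally have "N\<^sup>2 * (k - C) \<le> 0" by (simp add: algebra_simps)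
  then have "N\<^sup>2 \<le> 0" using k by (simp add: mult_le_0_iff)
  then show ?thesis by simp
qed

lemma symmetric_inner_mult:
  fixes A :: "real^'n^'n"
  assumes "transpose A = A"
  shows "x \<bullet> (A *v y) = (A *v x) \<bullet> y"
  using dot_lmul_matrix[of x A y] transpose_matrix_vector[of A x] assms by simp

lemma rayleigh_max_imp_eigenvector:
  fixes A :: "real^'n^'n"
  assumes sym: "transpose A = A" and S: "subspace S" and inv: "\<forall>x\<in>S. A *v x \<in> S"
    and vS: "v \<in> S" and vv: "v \<bullet> v = 1"
    and max: "\<forall>x\<in>S. x \<bullet> (A *v x) \<le> (v \<bullet> (A *v v)) * (x \<bullet> x)"
  shows "A *v v = (v \<bullet> (A *v v)) *\<^sub>R v"
proof -
  define lam where "lam = v \<bullet> (A *v v)"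
  define w where "w = A *v v - lam *\<^sub>R v"
  have wS: "w \<in> S" unfolding w_def using inv vS S by (simp add: subspace_diff subspace_scale)
  have vw: "v \<bullet> w = 0" unfolding w_def lam_def using vv by (simp add: inner_diff_right)
  have Av: "A *v v = w + lam *\<^sub>R v" by (simp add: w_def)
  have Aw: "v \<bullet> (A *v w) = w \<bullet> w"
    using symmetric_inner_mult[OF sym, of v w] vw by (simp add: Av inner_add_right inner_commute)
  \<comment> \<open>unless \<open>w = 0\<close>, moving \<open>v\<close> towards \<open>w\<close> increases the Rayleigh quotient to first order\<close>
  have "s * (2 * (w \<bullet> w)) \<le> s\<^sup>2 * (lam * (w \<bullet> w) - w \<bullet> (A *v w))" for s
  proof -
    have "v + s *\<^sub>R w \<in> S" using vS wS S by (simp add: subspace_add subspace_scale)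
    then have "(v + s *\<^sub>R w) \<bullet> (A *v (v + s *\<^sub>R w)) \<le> lam * ((v + s *\<^sub>R w) \<bullet> (v + s *\<^sub>R w))"
      using max lam_def by blast
    moreover have "(v + s *\<^sub>R w) \<bullet> (A *v (v + s *\<^sub>R w))
        = lam + 2 * s * (w \<bullet> w) + s\<^sup>2 * (w \<bullet> (A *v w))"
    proof -
      have "w \<bullet> (A *v v) = w \<bullet> w" using vw by (simp add: Av inner_add_right inner_commute)
      then show ?thesis using Aw
        by (simp add: matrix_vector_right_distrib matrix_vector_mult_scaleR inner_add_left
            inner_add_right lam_def power2_eq_square algebra_simps)
    qed
    moreover have "(v + s *\<^sub>R w) \<bullet> (v + s *\<^sub>R w) = 1 + s\<^sup>2 * (w \<bullet> w)"
      using vv vw by (simp add: inner_add_left inner_add_right inner_commute power2_eq_square)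
    ultimately have "lam + 2 * s * (w \<bullet> w) + s\<^sup>2 * (w \<bullet> (A *v w)) \<le> lam * (1 + s\<^sup>2 * (w \<bullet> w))"
      by metis
    then show ?thesis by (simp add: algebra_simps)
  qed
  then have "2 * (w \<bullet> w) = 0" by (rule linear_le_quadratic_imp_zero)
  then have "w = 0" by simp
  then show ?thesis using Av by (simp add: lam_def)
qed

lemma symmetric_invariant_subspace_eigenvector:
  fixes A :: "real^'n^'n"
  assumes sym: "transpose A = A" and S: "subspace S" and inv: "\<forall>x\<in>S. A *v x \<in> S"
    and x0: "x0 \<in> S" "x0 \<noteq> 0"
  obtains v where "v \<in> S" "norm v = 1" "A *v v = (v \<bullet> (A *v v)) *\<^sub>R v"
proof -
  define K where "K = S \<inter> sphere 0 1"
  define q where "q x = x \<bullet> (A *v x)" for x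
  have normalized: "(1 / norm x) *\<^sub>R x \<in> K" if "x \<in> S" "x \<noteq> 0" for x
    using that S by (auto simp: K_def subspace_scale)
  have "compact K" unfolding K_def
    by (metis S closed_subspace compact_sphere closed_Int_compact)
  moreover have "K \<noteq> {}" using normalized[OF x0] by auto
  moreover have "continuous_on K q" unfolding q_def
    by (intro continuous_intros linear_continuous_on) (simp add: matrix_vector_mul_bounded_linear)
  ultimately obtain v where vK: "v \<in> K" and vmax: "\<forall>y\<in>K. q y \<le> q v"
    using continuous_attains_sup by metis
  have vS: "v \<in> S" and vn: "norm v = 1" using vK by (auto simp: K_def)
  have "q x \<le> q v * (x \<bullet> x)" if "x \<in> S" for x
  proof (cases "x = 0")
    case True then show ?thesis by (simp add: q_def)
  next
    case False
    have "q ((1 / norm x) *\<^sub>R x) = q x / (norm x)\<^sup>2"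
      by (simp add: q_def matrix_vector_mult_scaleR power2_eq_square)
    then have "q x / (norm x)\<^sup>2 \<le> q v" using vmax normalized[OF that False] by metis
    then show ?thesis using False by (simp add: divide_le_eq power2_norm_eq_inner mult.commute)
  qed
  then have "A *v v = (v \<bullet> (A *v v)) *\<^sub>R v"
    using rayleigh_max_imp_eigenvector[OF sym S inv vS] vn by (simp add: q_def norm_eq_1)
  then show ?thesis using that vS vn by blast
qed

lemma orthonormal_eigenbasis_diagonalizes:
  fixes A :: mat3
  assumes Q: "orthogonal_matrix Q" and eig: "\<And>j. A *v column j Q = l j *\<^sub>R column j Q"
  shows "A = Q ** diag3 l ** transpose Q"
proof -
  have "(A ** Q)$i$j = (A *v column j Q)$i" for i j
    by (simp add: matrix_matrix_mult_def matrix_vector_mult_def column_def)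
  then have "A ** Q = Q ** diag3 l"
    using eig by (simp add: vec_eq_iff diag3_mult_nth column_def)
  then have "A ** (Q ** transpose Q) = Q ** diag3 l ** transpose Q"
    by (metis matrix_mul_assoc)
  then show ?thesis using Q by (simp add: orthogonal_matrix_def)
qed

lemma exists_orthogonal_nonzero:
  fixes v :: "real^3"
  assumes "norm v = 1"
  obtains w where "v \<bullet> w = 0" "w \<noteq> 0"
proof -
  obtain P where P: "orthogonal_matrix P" "P *v axis 1 1 = v"
    using orthogonal_matrix_exists_basis[OF assms] by metis
  have "orthogonal (column 1 P) (column 2 P)" "norm (column 2 P) = 1"
    using P(1) unfolding orthogonal_matrix_orthonormal_columns by auto
  then have "v \<bullet> column 2 P = 0" "column 2 P \<noteq> 0"
    using P(2) by (auto simp: orthogonal_def matrix_vector_mult_basis)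
  then show ?thesis by (rule that)
qed

lemma symmetric_spectral_decomposition:
  fixes A :: mat3
  assumes sym: "transpose A = A"
  obtains Q l where "orthogonal_matrix Q" "A = Q ** diag3 l ** transpose Q"
proof -
  have inv: "\<forall>x\<in>{x. u \<bullet> x = 0}. A *v x \<in> {x. u \<bullet> x = 0}" if "A *v u = c *\<^sub>R u" for u c
  proof
    fix x assume "x \<in> {x. u \<bullet> x = 0}"
    then show "A *v x \<in> {x. u \<bullet> x = 0}"
      using symmetric_inner_mult[OF sym, of u x] that by simp
  qed
  obtain v1 where v1n: "norm v1 = 1" and v1e: "A *v v1 = (v1 \<bullet> (A *v v1)) *\<^sub>R v1"
    using symmetric_invariant_subspace_eigenvector[OF sym subspace_UNIV, of "axis 1 1"] by auto
  obtain w where "v1 \<bullet> w = 0" "w \<noteq> 0" using exists_orthogonal_nonzero[OF v1n] .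
  then obtain v2 where o12: "v1 \<bullet> v2 = 0" and v2n: "norm v2 = 1"
    and v2e: "A *v v2 = (v2 \<bullet> (A *v v2)) *\<^sub>R v2"
    using symmetric_invariant_subspace_eigenvector[OF sym subspace_hyperplane inv[OF v1e], of w]
    by auto
  define S3 where "S3 = {x. v1 \<bullet> x = 0} \<inter> {x. v2 \<bullet> x = 0}"
  have sub3: "subspace S3" unfolding S3_def by (intro subspace_inter subspace_hyperplane)
  have inv3: "\<forall>x\<in>S3. A *v x \<in> S3" using inv[OF v1e] inv[OF v2e] by (simp add: S3_def)
  have "(norm (cross3 v1 v2))\<^sup>2 = 1" using norm_cross_dot[of v1 v2] o12 v1n v2n by simp
  then have "cross3 v1 v2 \<noteq> 0" by auto
  moreover have "cross3 v1 v2 \<in> S3" unfolding S3_def by (simp add: dot_cross_self)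
  ultimately obtain v3 where "v3 \<in> S3" and v3n: "norm v3 = 1"
    and v3e: "A *v v3 = (v3 \<bullet> (A *v v3)) *\<^sub>R v3"
    using symmetric_invariant_subspace_eigenvector[OF sym sub3 inv3] by blast
  then have o13: "v1 \<bullet> v3 = 0" and o23: "v2 \<bullet> v3 = 0" by (auto simp: S3_def)
  define vs where "vs j = (if j = 1 then v1 else if j = 2 then v2 else v3)" for j :: 3
  define Q :: mat3 where "Q = (\<chi> i j. vs j $ i)"
  have colQ: "column j Q = vs j" for j by (simp add: Q_def column_def vec_eq_iff)
  have "orthogonal (vs i) (vs j)" if "i \<noteq> j" for i j
    using that exhaust_3[of i] exhaust_3[of j] o12 o13 o23
    by (auto simp: vs_def orthogonal_def inner_commute)
  moreover have "norm (vs j) = 1" for j using v1n v2n v3n by (simp add: vs_def)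
  ultimately have Q: "orthogonal_matrix Q"
    unfolding orthogonal_matrix_orthonormal_columns colQ by auto
  have "A *v column j Q = (vs j \<bullet> (A *v vs j)) *\<^sub>R column j Q" for j
    using v1e v2e v3e by (simp add: colQ vs_def)
  then show ?thesis by (rule that[OF Q orthonormal_eigenbasis_diagonalizes[OF Q]])
qed

section \<open>Positive definite matrices\<close>

lemma PSym3_spectral_pos:
  assumes U: "U \<in> PSym3" and Q: "orthogonal_matrix Q" and eq: "U = Q ** diag3 l ** transpose Q"
  shows "l i > 0"
proof -
  define x where "x = column i Q"
  have "U ** Q = Q ** diag3 l ** (transpose Q ** Q)"
    by (simp only: eq matrix_mul_assoc)
  then have UQ: "U ** Q = Q ** diag3 l" using Q by (simp add: orthogonal_matrix_def)
  have "U *v x = U *v (Q *v axis i 1)" by (simp add: x_def matrix_vector_mult_basis)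
  also have "\<dots> = (U ** Q) *v axis i 1" by (rule matrix_vector_mul_assoc)
  also have "\<dots> = l i *\<^sub>R x"
    by (simp add: UQ x_def matrix_vector_mult_basis column_def vec_eq_iff diag3_mult_nth)
  finally have Ux: "U *v x = l i *\<^sub>R x" .
  have "norm x = 1" using Q by (simp add: x_def orthogonal_matrix_orthonormal_columns)
  then have "x \<noteq> 0" "x \<bullet> x = 1" by (auto simp: norm_eq_1)
  then have "x \<bullet> (U *v x) > 0" using U by (simp add: PSym3_def)
  then show ?thesis using Ux \<open>x \<bullet> x = 1\<close> by simp
qed

lemma PSym3_spectral_decomposition:
  assumes "U \<in> PSym3"
  obtains Q l where "orthogonal_matrix Q" "\<forall>i. l i > 0" "U = Q ** diag3 l ** transpose Q"
proof -
  have "transpose U = U" using assms by (simp add: PSym3_def Sym3_def)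
  then obtain Q l where Q: "orthogonal_matrix Q" and U: "U = Q ** diag3 l ** transpose Q"
    by (rule symmetric_spectral_decomposition)
  then have "\<forall>i. l i > 0" using PSym3_spectral_pos[OF assms] by blast
  then show ?thesis using that Q U by blast
qed

lemma diag3_in_PSym3:
  assumes "\<forall>i. l i > 0"
  shows "diag3 l \<in> PSym3"
proof -
  have "x \<bullet> (diag3 l *v x) > 0" if "x \<noteq> 0" for x
  proof -
    obtain j where "x$j \<noteq> 0" using \<open>x \<noteq> 0\<close> by (auto simp: vec_eq_iff)
    then have "l j * (x$j)\<^sup>2 > 0" using assms by simp
    moreover have "x \<bullet> (diag3 l *v x) = (\<Sum>i\<in>UNIV. l i * (x$i)\<^sup>2)"
      by (simp add: inner_vec_def diag3_def matrix_vector_mult_def sum_3 power2_eq_square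
          algebra_simps)
    ultimately show ?thesis
      using assms sum_pos2[of UNIV j "\<lambda>i. l i * (x$i)\<^sup>2"] by (simp add: less_imp_le)
  qed
  then show ?thesis by (simp add: PSym3_def Sym3_def)
qed

lemma mat1_in_PSym3: "mat 1 \<in> PSym3"
  using diag3_in_PSym3[of "\<lambda>i. 1"] by (simp add: diag3_const_1)

lemma convex_PSym3: "convex PSym3"
proof (rule convexI)
  fix U V :: mat3 and u v :: real
  assume U: "U \<in> PSym3" and V: "V \<in> PSym3" and uv: "0 \<le> u" "0 \<le> v" "u + v = 1"
  have "x \<bullet> ((u *\<^sub>R U + v *\<^sub>R V) *v x) > 0" if "x \<noteq> 0" for x
  proof -
    define m where "m = min (x \<bullet> (U *v x)) (x \<bullet> (V *v x))"
    have "m > 0" using U V that by (auto simp: PSym3_def m_def)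
    have "x \<bullet> ((u *\<^sub>R U + v *\<^sub>R V) *v x) = u * (x \<bullet> (U *v x)) + v * (x \<bullet> (V *v x))"
      by (simp add: matrix_vector_mult_add_rdistrib scaleR_matrix_vector_assoc[symmetric]
          inner_add_right)
    also have "\<dots> \<ge> u * m + v * m"
      using uv by (intro add_mono mult_left_mono) (auto simp: m_def)
    finally show ?thesis using \<open>m > 0\<close> uv by (simp add: distrib_right[symmetric])
  qed
  moreover have "transpose (u *\<^sub>R U + v *\<^sub>R V) = u *\<^sub>R U + v *\<^sub>R V"
    using U V by (simp add: PSym3_def Sym3_def vec_eq_iff transpose_def)
  ultimately show "u *\<^sub>R U + v *\<^sub>R V \<in> PSym3" by (simp add: PSym3_def Sym3_def)
qed

lemma mlog_diag3:
  assumes "\<forall>i. l i > 0"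
  shows "mlog (diag3 l) = diag3 (\<lambda>i. ln (l i))"
  using mlog_spectral[OF orthogonal_matrix_id assms] by simp

lemma mlog_mat1: "mlog (mat 1) = 0"
  using mlog_diag3[of "\<lambda>i. 1"] by (simp add: diag3_const_1) (simp add: diag3_def vec_eq_iff)

section \<open>Potentials\<close>

lemma potential_has_derivative_along_line:
  assumes pot: "is_potential W T" and line: "\<forall>s\<in>S. K + s *\<^sub>R E \<in> PSym3"
    and t: "t \<in> S" and E: "E \<in> Sym3"
  shows "((\<lambda>s. W (K + s *\<^sub>R E)) has_real_derivative frob (T (K + t *\<^sub>R E)) E) (at t within S)"
proof -
  obtain D where dD: "(W has_derivative D) (at (K + t *\<^sub>R E) within PSym3)"
    and DH: "\<forall>H\<in>Sym3. D H = frob (T (K + t *\<^sub>R E)) H"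
    using pot line t unfolding is_potential_def by blast
  have c: "((\<lambda>s. K + s *\<^sub>R E) has_derivative (\<lambda>h. h *\<^sub>R E)) (at t within S)"
    by (auto intro!: derivative_eq_intros)
  have W': "(W has_derivative D) (at (K + t *\<^sub>R E) within (\<lambda>s. K + s *\<^sub>R E) ` S)"
    by (rule has_derivative_subset[OF dD]) (use line in auto)
  have "((W \<circ> (\<lambda>s. K + s *\<^sub>R E)) has_derivative (D \<circ> (\<lambda>h. h *\<^sub>R E))) (at t within S)"
    using diff_chain_within[OF c W'] by simp
  moreover have "D \<circ> (\<lambda>h. h *\<^sub>R E) = (*) (frob (T (K + t *\<^sub>R E)) E)"
  proof
    fix h
    have "linear D" using dD has_derivative_linear by blast
    then have "D (h *\<^sub>R E) = h *\<^sub>R D E" by (rule linear_scale)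
    then show "(D \<circ> (\<lambda>h. h *\<^sub>R E)) h = frob (T (K + t *\<^sub>R E)) E * h" using DH E by simp
  qed
  ultimately show ?thesis unfolding has_field_derivative_def o_def by simp
qed

lemma potential_line_increment:
  assumes pot: "is_potential W T" and S: "convex S" and line: "\<forall>s\<in>S. K + s *\<^sub>R E \<in> PSym3"
    and E: "E \<in> Sym3"
    and h: "\<And>t. t \<in> S \<Longrightarrow> (h has_real_derivative frob (T (K + t *\<^sub>R E)) E) (at t within S)"
    and ab: "a \<in> S" "b \<in> S"
  shows "W (K + a *\<^sub>R E) - W (K + b *\<^sub>R E) = h a - h b"
proof -
  have "\<exists>c. \<forall>s\<in>S. W (K + s *\<^sub>R E) - h s = c"
    using potential_has_derivative_along_line[OF pot line _ E] h
    by (intro has_field_derivative_zero_constant[OF S]) (auto intro!: derivative_eq_intros)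
  then obtain c where "\<forall>s\<in>S. W (K + s *\<^sub>R E) - h s = c" by blast
  then have "W (K + a *\<^sub>R E) - h a = c" "W (K + b *\<^sub>R E) - h b = c" using ab by auto
  then show ?thesis by linarith
qed

lemma potential_unique:
  assumes W: "is_potential W T" and V: "is_potential V T" and one: "W (mat 1) = V (mat 1)"
    and U: "U \<in> PSym3"
  shows "W U = V U"
proof -
  define E where "E = U - mat 1"
  have E: "E \<in> Sym3" using U unfolding E_def PSym3_def Sym3_def
    by (simp add: vec_eq_iff transpose_def mat_def)
  have "mat 1 + s *\<^sub>R E = (1 - s) *\<^sub>R mat 1 + s *\<^sub>R U" for s
    by (simp add: E_def algebra_simps)
  then have line: "\<forall>s\<in>{0..1}. mat 1 + s *\<^sub>R E \<in> PSym3"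
    using convexD_alt[OF convex_PSym3 mat1_in_PSym3 U] by simp
  have "W (mat 1 + 1 *\<^sub>R E) - W (mat 1 + 0 *\<^sub>R E) = V (mat 1 + 1 *\<^sub>R E) - V (mat 1 + 0 *\<^sub>R E)"
    using potential_has_derivative_along_line[OF V line _ E]
    by (intro potential_line_increment[OF W convex_real_interval(5) line E]) auto
  then show ?thesis using one by (simp add: E_def)
qed

definition diag_ab1 :: "real \<Rightarrow> real \<Rightarrow> mat3" where
  "diag_ab1 a b = diag3 (\<lambda>i. if i = 1 then a else if i = 2 then b else 1)"

definition unit_diag3 :: "3 \<Rightarrow> mat3" where
  "unit_diag3 j = diag3 (\<lambda>i. if i = j then 1 else 0)"

lemma diag_ab1_line:
  "diag_ab1 t b = diag_ab1 0 b + t *\<^sub>R unit_diag3 1"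
  "diag_ab1 a t = diag_ab1 a 0 + t *\<^sub>R unit_diag3 2"
  unfolding diag_ab1_def unit_diag3_def diag3_def by (simp_all add: vec_eq_iff)

lemma unit_diag3_in_Sym3: "unit_diag3 j \<in> Sym3"
  unfolding Sym3_def unit_diag3_def by simp

lemma frob_unit_diag3: "frob X (unit_diag3 j) = X$j$j"
  unfolding frob_eq_sum unit_diag3_def diag3_def using exhaust_3[of j] by (auto simp: sum_3)

lemma diag_ab1_in_PSym3: "a > 0 \<Longrightarrow> b > 0 \<Longrightarrow> diag_ab1 a b \<in> PSym3"
  unfolding diag_ab1_def by (rule diag3_in_PSym3) auto

lemma Tmap_diag_ab1_nth:
  assumes "a > 0" "b > 0"
  shows "(Tmap G L (diag_ab1 a b))$1$1 = 2*G*ln a + L*(ln a + ln b)"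
    and "(Tmap G L (diag_ab1 a b))$2$2 = 2*G*ln b + L*(ln a + ln b)"
proof -
  have "mlog (diag_ab1 a b) = diag3 (\<lambda>i. ln (if i = 1 then a else if i = 2 then b else 1))"
    unfolding diag_ab1_def using assms by (intro mlog_diag3) auto
  then show "(Tmap G L (diag_ab1 a b))$1$1 = 2*G*ln a + L*(ln a + ln b)"
    "(Tmap G L (diag_ab1 a b))$2$2 = 2*G*ln b + L*(ln a + ln b)"
    unfolding Tmap_def by (simp_all add: diag3_def trace_def sum_3 mat_def)
qed

lemma potential_Tmap_increments:
  assumes pot: "is_potential W (Tmap G L)" and ab: "a > 0" "b > 0"
  shows "W (diag_ab1 a b) - W (diag_ab1 1 b) = (2*G + L) * (a * ln a - a + 1) + L * (a - 1) * ln b"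
    and "W (diag_ab1 a b) - W (diag_ab1 a 1) = (2*G + L) * (b * ln b - b + 1) + L * (b - 1) * ln a"
proof -
  let ?h = "\<lambda>c s. (2*G + L) * (s * ln s - s) + L * s * ln c"
  have "W (diag_ab1 0 b + a *\<^sub>R unit_diag3 1) - W (diag_ab1 0 b + 1 *\<^sub>R unit_diag3 1) = ?h b a - ?h b 1"
  proof (rule potential_line_increment[where h = "?h b", OF pot convex_real_interval(3) _ unit_diag3_in_Sym3])
    show "\<forall>s\<in>{0<..}. diag_ab1 0 b + s *\<^sub>R unit_diag3 1 \<in> PSym3"
      using ab by (simp add: diag_ab1_line(1)[symmetric] diag_ab1_in_PSym3)
    show "(?h b has_real_derivative frob (Tmap G L (diag_ab1 0 b + t *\<^sub>R unit_diag3 1)) (unit_diag3 1))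
        (at t within {0<..})" if "t \<in> {0<..}" for t
      using that ab
      by (auto intro!: derivative_eq_intros
          simp: diag_ab1_line(1)[symmetric] frob_unit_diag3 Tmap_diag_ab1_nth algebra_simps)
  qed (use ab in auto)
  then show "W (diag_ab1 a b) - W (diag_ab1 1 b) = (2*G + L) * (a * ln a - a + 1) + L * (a - 1) * ln b"
    unfolding diag_ab1_line(1)[symmetric] by (simp add: algebra_simps)
  have "W (diag_ab1 a 0 + b *\<^sub>R unit_diag3 2) - W (diag_ab1 a 0 + 1 *\<^sub>R unit_diag3 2) = ?h a b - ?h a 1"
  proof (rule potential_line_increment[where h = "?h a", OF pot convex_real_interval(3) _ unit_diag3_in_Sym3])
    show "\<forall>s\<in>{0<..}. diag_ab1 a 0 + s *\<^sub>R unit_diag3 2 \<in> PSym3"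
      using ab by (simp add: diag_ab1_line(2)[symmetric] diag_ab1_in_PSym3)
    show "(?h a has_real_derivative frob (Tmap G L (diag_ab1 a 0 + t *\<^sub>R unit_diag3 2)) (unit_diag3 2))
        (at t within {0<..})" if "t \<in> {0<..}" for t
      using that ab
      by (auto intro!: derivative_eq_intros
          simp: diag_ab1_line(2)[symmetric] frob_unit_diag3 Tmap_diag_ab1_nth algebra_simps)
  qed (use ab in auto)
  then show "W (diag_ab1 a b) - W (diag_ab1 a 1) = (2*G + L) * (b * ln b - b + 1) + L * (b - 1) * ln a"
    unfolding diag_ab1_line(2)[symmetric] by (simp add: algebra_simps)
qed

lemma Tmap_not_potential:
  assumes "L \<noteq> 0"
  shows "\<not> is_potential W (Tmap G L)"
proof
  assume pot: "is_potential W (Tmap G L)"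
  define e where "e = exp (1::real)"
  have e: "e > 1" "ln e = 1" "ln (e * e) = 2" unfolding e_def by (simp_all add: ln_mult)
  \<comment> \<open>the increments of \<open>W\<close> around the rectangle \<open>[1,e] \<times> [1,e\<^sup>2]\<close> in the \<open>(a,b)\<close>-plane do not cancel\<close>
  have "W (diag_ab1 e (e * e)) - W (diag_ab1 1 (e * e)) = 2*G + L + L * (e - 1) * 2"
    and "W (diag_ab1 e 1) - W (diag_ab1 1 1) = 2*G + L"
    and "W (diag_ab1 e (e * e)) - W (diag_ab1 e 1) = (2*G + L) * (e * e + 1) + L * (e * e - 1)"
    and "W (diag_ab1 1 (e * e)) - W (diag_ab1 1 1) = (2*G + L) * (e * e + 1)"
    using potential_Tmap_increments[OF pot, of e "e * e"] potential_Tmap_increments[OF pot, of e 1]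
      potential_Tmap_increments[OF pot, of 1 "e * e"] e
    by simp_all
  then have "L * (e - 1) * 2 = L * (e * e - 1)" by linarith
  then have "L * (e - 1)\<^sup>2 = 0" by (simp add: power2_eq_square algebra_simps)
  then have "(e - 1)\<^sup>2 = 0" using assms by simp
  then show False using e by simp
qed

section \<open>The logarithmic energy\<close>

lemma frob_spectral_same:
  assumes "orthogonal_matrix Q"
  shows "frob (Q ** diag3 a ** transpose Q) (Q ** diag3 b ** transpose Q) = (\<Sum>k\<in>UNIV. a k * b k)"
  using assms unfolding frob_spectral by (simp add: orthogonal_matrix_def mat_def sum_3)

lemma orthogonal_matrix_sq_weighted_sum:
  assumes "orthogonal_matrix (C::mat3)"
  shows "(\<Sum>k\<in>UNIV. \<Sum>m\<in>UNIV. (C$k$m)\<^sup>2 * (f k + g m)) = sum f UNIV + sum g UNIV"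
proof -
  have "norm (row k C) = 1" "norm (column m C) = 1" for k m
    using assms orthogonal_matrix_orthonormal_rows orthogonal_matrix_orthonormal_columns by blast+
  then have "row k C \<bullet> row k C = 1" "column m C \<bullet> column m C = 1" for k m
    by (simp_all add: norm_eq_1)
  then have rows: "(\<Sum>m\<in>UNIV. (C$k$m)\<^sup>2) = 1" and cols: "(\<Sum>k\<in>UNIV. (C$k$m)\<^sup>2) = 1" for k m
    by (simp_all add: inner_vec_def row_def column_def power2_eq_square)
  have "(\<Sum>k\<in>UNIV. \<Sum>m\<in>UNIV. (C$k$m)\<^sup>2 * (f k + g m))
      = (\<Sum>k\<in>UNIV. \<Sum>m\<in>UNIV. (C$k$m)\<^sup>2 * f k) + (\<Sum>k\<in>UNIV. \<Sum>m\<in>UNIV. (C$k$m)\<^sup>2 * g m)"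
    by (simp add: distrib_left sum.distrib)
  also have "\<dots> = (\<Sum>k\<in>UNIV. f k * (\<Sum>m\<in>UNIV. (C$k$m)\<^sup>2))
      + (\<Sum>m\<in>UNIV. g m * (\<Sum>k\<in>UNIV. (C$k$m)\<^sup>2))"
    by (subst (2) sum.swap) (simp add: sum_distrib_left mult.commute)
  finally show ?thesis by (simp add: rows cols)
qed

definition trace_xlnx :: "mat3 \<Rightarrow> real" where
  "trace_xlnx V = frob V (mlog V - mat 1)"

lemma trace_xlnx_spectral:
  assumes Q: "orthogonal_matrix Q" and l: "\<forall>i. l i > 0" and V: "V = Q ** diag3 l ** transpose Q"
  shows "trace_xlnx V = (\<Sum>k\<in>UNIV. l k * ln (l k) - l k)"
proof -
  have one: "mat 1 = Q ** diag3 (\<lambda>i. 1) ** transpose Q"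
    using Q by (simp add: diag3_const_1 orthogonal_matrix_def)
  have "trace_xlnx V = frob V (mlog V) - frob V (mat 1)"
    by (simp add: trace_xlnx_def frob_inner inner_diff_right)
  also have "\<dots> = (\<Sum>k\<in>UNIV. l k * ln (l k)) - (\<Sum>k\<in>UNIV. l k)"
    unfolding mlog_spectral[OF Q l V] unfolding one V frob_spectral_same[OF Q] by simp
  finally show ?thesis by (simp add: sum_subtractf)
qed

lemma xlnx_bregman_bounds:
  fixes x y :: real
  assumes "x > 0" "y > 0"
  shows "0 \<le> y * ln y - y - y * ln x + x" and "y * ln y - y - y * ln x + x \<le> (y - x)\<^sup>2 / x"
proof -
  have "ln (x / y) \<le> x / y - 1" using assms by (intro ln_le_minus_one) simp
  then have "y * ln (x / y) \<le> y * (x / y - 1)" using assms by (simp add: mult_left_mono)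
  then show "0 \<le> y * ln y - y - y * ln x + x" using assms by (simp add: ln_div algebra_simps)
  have "ln (y / x) \<le> y / x - 1" using assms by (intro ln_le_minus_one) simp
  then have "y * ln (y / x) \<le> y * (y / x - 1)" using assms by (simp add: mult_left_mono)
  then have "y * ln y - y * ln x \<le> y * y / x - y" using assms by (simp add: ln_div algebra_simps)
  moreover have "(y - x)\<^sup>2 / x = y * y / x - 2 * y + x"
    using assms by (simp add: power2_eq_square field_simps)
  ultimately show "y * ln y - y - y * ln x + x \<le> (y - x)\<^sup>2 / x" by linarith
qed

lemma trace_xlnx_remainder_spectral:
  assumes P: "orthogonal_matrix P" and la: "\<forall>i. la i > 0" and U: "U = P ** diag3 la ** transpose P"
    and Q: "orthogonal_matrix Q" and mu: "\<forall>i. mu i > 0" and V: "V = Q ** diag3 mu ** transpose Q"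
  shows "trace_xlnx V - trace_xlnx U - frob (mlog U) (V - U)
    = (\<Sum>k\<in>UNIV. \<Sum>m\<in>UNIV. ((transpose P ** Q)$k$m)\<^sup>2
        * (mu m * ln (mu m) - mu m - mu m * ln (la k) + la k))"
    (is "_ = (\<Sum>k\<in>UNIV. \<Sum>m\<in>UNIV. ?c k m * _)")
proof -
  have C: "orthogonal_matrix (transpose P ** Q)" using P Q by (simp add: orthogonal_matrix_mul)
  have mU: "mlog U = P ** diag3 (\<lambda>i. ln (la i)) ** transpose P" by (rule mlog_spectral[OF P la U])
  have "frob (mlog U) (V - U) = frob (mlog U) V - frob (mlog U) U"
    by (simp add: frob_inner inner_diff_right)
  also have "frob (mlog U) V = (\<Sum>k\<in>UNIV. \<Sum>m\<in>UNIV. ?c k m * ln (la k) * mu m)"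
    unfolding mU V frob_spectral by (simp add: mult.assoc)
  also have "frob (mlog U) U = (\<Sum>k\<in>UNIV. ln (la k) * la k)"
    unfolding mU unfolding U frob_spectral_same[OF P] ..
  finally have lin: "frob (mlog U) (V - U)
      = (\<Sum>k\<in>UNIV. \<Sum>m\<in>UNIV. ?c k m * ln (la k) * mu m) - (\<Sum>k\<in>UNIV. ln (la k) * la k)" .
  have "(\<Sum>k\<in>UNIV. \<Sum>m\<in>UNIV. ?c k m * (mu m * ln (mu m) - mu m - mu m * ln (la k) + la k))
      = (\<Sum>k\<in>UNIV. \<Sum>m\<in>UNIV. ?c k m * (la k + (mu m * ln (mu m) - mu m)) - ?c k m * ln (la k) * mu m)"
    by (intro sum.cong refl) (simp add: algebra_simps)
  also have "\<dots> = (\<Sum>k\<in>UNIV. la k) + (\<Sum>m\<in>UNIV. mu m * ln (mu m) - mu m)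
      - (\<Sum>k\<in>UNIV. \<Sum>m\<in>UNIV. ?c k m * ln (la k) * mu m)"
    by (simp add: sum_subtractf orthogonal_matrix_sq_weighted_sum[OF C])
  finally show ?thesis
    unfolding lin trace_xlnx_spectral[OF P la U] trace_xlnx_spectral[OF Q mu V]
    by (simp add: sum_subtractf algebra_simps)
qed

lemma norm_diff_spectral:
  assumes P: "orthogonal_matrix P" and U: "U = P ** diag3 la ** transpose P"
    and Q: "orthogonal_matrix Q" and V: "V = Q ** diag3 mu ** transpose Q"
  shows "(norm (V - U))\<^sup>2 = (\<Sum>k\<in>UNIV. \<Sum>m\<in>UNIV. ((transpose P ** Q)$k$m)\<^sup>2 * (mu m - la k)\<^sup>2)"
    (is "_ = (\<Sum>k\<in>UNIV. \<Sum>m\<in>UNIV. ?c k m * _)")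
proof -
  have C: "orthogonal_matrix (transpose P ** Q)" using P Q by (simp add: orthogonal_matrix_mul)
  have "(norm (V - U))\<^sup>2 = frob V V - 2 * frob U V + frob U U"
    unfolding power2_norm_eq_inner frob_inner by (simp add: inner_diff_left inner_diff_right inner_commute)
  moreover have "frob U V = (\<Sum>k\<in>UNIV. \<Sum>m\<in>UNIV. ?c k m * la k * mu m)"
    unfolding U V frob_spectral ..
  moreover have "frob V V + frob U U = (\<Sum>k\<in>UNIV. \<Sum>m\<in>UNIV. ?c k m * (la k * la k + mu m * mu m))"
    unfolding orthogonal_matrix_sq_weighted_sum[OF C] unfolding U V
    by (simp add: frob_spectral_same[OF P] frob_spectral_same[OF Q])
  ultimately have "(norm (V - U))\<^sup>2 = (\<Sum>k\<in>UNIV. \<Sum>m\<in>UNIV. ?c k m * (la k * la k + mu m * mu m))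
      - 2 * (\<Sum>k\<in>UNIV. \<Sum>m\<in>UNIV. ?c k m * la k * mu m)"
    by linarith
  then show ?thesis
    by (simp add: sum_distrib_left sum_subtractf[symmetric] power2_eq_square algebra_simps)
qed

lemma trace_xlnx_remainder_bounds:
  assumes P: "orthogonal_matrix P" and la: "\<forall>i. la i > 0" and U: "U = P ** diag3 la ** transpose P"
    and m0: "m0 > 0" "\<forall>k. m0 \<le> la k" and V: "V \<in> PSym3"
  shows "0 \<le> trace_xlnx V - trace_xlnx U - frob (mlog U) (V - U)"
    and "trace_xlnx V - trace_xlnx U - frob (mlog U) (V - U) \<le> (norm (V - U))\<^sup>2 / m0"
proof -
  obtain Q mu where Q: "orthogonal_matrix Q" and mu: "\<forall>i. mu i > 0"
    and V: "V = Q ** diag3 mu ** transpose Q"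
    using PSym3_spectral_decomposition[OF V] by blast
  define c where "c k m = ((transpose P ** Q)$k$m)\<^sup>2" for k m
  define \<beta> where "\<beta> k m = mu m * ln (mu m) - mu m - mu m * ln (la k) + la k" for k m
  have R: "trace_xlnx V - trace_xlnx U - frob (mlog U) (V - U) = (\<Sum>k\<in>UNIV. \<Sum>m\<in>UNIV. c k m * \<beta> k m)"
    unfolding c_def \<beta>_def by (rule trace_xlnx_remainder_spectral[OF P la U Q mu V])
  have c: "c k m \<ge> 0" for k m by (simp add: c_def)
  have \<beta>: "0 \<le> \<beta> k m" "\<beta> k m \<le> (mu m - la k)\<^sup>2 / m0" for k m
  proof -
    show "0 \<le> \<beta> k m" unfolding \<beta>_def using xlnx_bregman_bounds(1) la mu by blast
    have "\<beta> k m \<le> (mu m - la k)\<^sup>2 / la k" unfolding \<beta>_def using xlnx_bregman_bounds(2) la mu by blast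
    also have "\<dots> \<le> (mu m - la k)\<^sup>2 / m0" using m0 la by (intro divide_left_mono) auto
    finally show "\<beta> k m \<le> (mu m - la k)\<^sup>2 / m0" .
  qed
  show "0 \<le> trace_xlnx V - trace_xlnx U - frob (mlog U) (V - U)"
    unfolding R using c \<beta> by (intro sum_nonneg) simp
  have "(\<Sum>k\<in>UNIV. \<Sum>m\<in>UNIV. c k m * \<beta> k m) \<le> (\<Sum>k\<in>UNIV. \<Sum>m\<in>UNIV. c k m * ((mu m - la k)\<^sup>2 / m0))"
    using c \<beta> by (intro sum_mono mult_left_mono) auto
  also have "\<dots> = (norm (V - U))\<^sup>2 / m0"
    unfolding norm_diff_spectral[OF P U Q V] c_def by (simp add: sum_divide_distrib)
  finally show "trace_xlnx V - trace_xlnx U - frob (mlog U) (V - U) \<le> (norm (V - U))\<^sup>2 / m0"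
    unfolding R .
qed

lemma trace_xlnx_has_derivative:
  assumes U: "U \<in> PSym3"
  shows "(trace_xlnx has_derivative frob (mlog U)) (at U within PSym3)"
proof -
  obtain P la where P: "orthogonal_matrix P" and la: "\<forall>i. la i > 0"
    and Ueq: "U = P ** diag3 la ** transpose P"
    using PSym3_spectral_decomposition[OF U] by blast
  define m0 where "m0 = Min (range la)"
  have m0: "m0 > 0" "\<forall>k. m0 \<le> la k" unfolding m0_def using la by (auto simp: Min_gr_iff)
  define R where "R y = trace_xlnx y - trace_xlnx U - frob (mlog U) (y - U)" for y
  have "((\<lambda>y. (1 / norm (y - U)) *\<^sub>R R y) \<longlongrightarrow> 0) (at U within PSym3)"
  proof (rule tendsto_0_le[where f="\<lambda>y. y - U" and K="1/m0"])
    show "((\<lambda>y. y - U) \<longlongrightarrow> 0) (at U within PSym3)"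
      by (rule tendsto_eq_intros | simp)+
    show "\<forall>\<^sub>F y in at U within PSym3. norm ((1 / norm (y - U)) *\<^sub>R R y) \<le> norm (y - U) * (1 / m0)"
      unfolding eventually_at_filter
    proof (rule always_eventually, intro allI impI)
      fix y assume "y \<noteq> U" "y \<in> PSym3"
      then have np: "norm (y - U) > 0" by simp
      have "0 \<le> R y" "R y \<le> (norm (y - U))\<^sup>2 / m0"
        unfolding R_def using trace_xlnx_remainder_bounds[OF P la Ueq m0 \<open>y \<in> PSym3\<close>] by auto
      then have "R y / norm (y - U) \<le> norm (y - U) / m0"
        using np by (simp add: divide_le_eq power2_eq_square)
      then show "norm ((1 / norm (y - U)) *\<^sub>R R y) \<le> norm (y - U) * (1 / m0)"
        using \<open>0 \<le> R y\<close> by simp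
    qed
  qed
  moreover have "bounded_linear (frob (mlog U))"
    unfolding frob_inner by (rule bounded_linear_inner_right)
  ultimately show ?thesis
    unfolding has_derivative_within R_def by (simp add: algebra_simps)
qed

definition log_energy :: "real \<Rightarrow> mat3 \<Rightarrow> real" where
  "log_energy G U = 2 * G * (trace_xlnx U + 3)"

lemma log_energy_potential: "is_potential (log_energy G) (Tmap G 0)"
  unfolding is_potential_def
proof
  fix U assume "U \<in> PSym3"
  have "(log_energy G has_derivative (\<lambda>H. 2 * G * (frob (mlog U) H + 0))) (at U within PSym3)"
    unfolding log_energy_def[abs_def]
    by (intro derivative_intros trace_xlnx_has_derivative[OF \<open>U \<in> PSym3\<close>])
  moreover have "2 * G * (frob (mlog U) H + 0) = frob (Tmap G 0 U) H" for H
    by (simp add: Tmap_def frob_inner)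
  ultimately show "\<exists>D. (log_energy G has_derivative D) (at U within PSym3) \<and>
      (\<forall>H\<in>Sym3. D H = frob (Tmap G 0 U) H)"
    by auto
qed

lemma log_energy_mat1: "log_energy G (mat 1) = 0"
proof -
  have "trace_xlnx (mat 1) = -3"
    unfolding trace_xlnx_def mlog_mat1 frob_eq_sum by (simp add: sum_3 mat_def)
  then show ?thesis by (simp add: log_energy_def)
qed

lemma log_energy_spectral:
  assumes U: "U \<in> PSym3" and Q: "orthogonal_matrix Q" and eq: "U = Q ** diag3 l ** transpose Q"
  shows "log_energy G U = 2 * G * (\<Sum>i\<in>UNIV. l i * (ln (l i) - 1)) + 6 * G"
proof -
  have "\<forall>i. l i > 0" using PSym3_spectral_pos[OF U Q eq] by blast
  then have "trace_xlnx U = (\<Sum>i\<in>UNIV. l i * (ln (l i) - 1))"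
    using trace_xlnx_spectral[OF Q _ eq] by (simp add: algebra_simps)
  then show ?thesis by (simp add: log_energy_def algebra_simps)
qed

theorem mainTheorem13:
  fixes G \<Lambda> :: real
  assumes "G \<noteq> 0"
  shows "((\<exists>W. is_potential W (Tmap G \<Lambda>)) \<longleftrightarrow> \<Lambda> = 0) \<and>
    (\<Lambda> = 0 \<longrightarrow>
      (let W0 = (\<lambda>U. 2 * G * (frob U (mlog U - mat 1) + 3)) in
        is_potential W0 (Tmap G \<Lambda>) \<and> W0 (mat 1) = 0 \<and>
        (\<forall>W. is_potential W (Tmap G \<Lambda>) \<and> W (mat 1) = 0 \<longrightarrow> (\<forall>U\<in>PSym3. W U = W0 U)) \<and>
        (\<forall>U Q l. U \<in> PSym3 \<and> orthogonal_matrix Q \<and> U = Q ** diag3 l ** transpose Q \<longrightarrow>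
           W0 U = 2 * G * (\<Sum>i\<in>UNIV. l i * (ln (l i) - 1)) + 6 * G)))"
proof -
  have W0: "(\<lambda>U. 2 * G * (frob U (mlog U - mat 1) + 3)) = log_energy G"
    by (simp add: fun_eq_iff log_energy_def trace_xlnx_def)
  have "is_potential W (Tmap G 0) \<and> W (mat 1) = 0 \<Longrightarrow> U \<in> PSym3 \<Longrightarrow> W U = log_energy G U" for W U
    using potential_unique[OF _ log_energy_potential] log_energy_mat1 by auto
  then show ?thesis
    unfolding Let_def W0
    using Tmap_not_potential log_energy_potential log_energy_mat1 log_energy_spectral by blast
qed

end
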